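(* Let $q,t,v$ be indeterminates (or complex numbers with $|v|<1$, $|t|<1$, in the region of convergence). Then the $1$-point function $$\widehat F(q,t):=\mathrm{Tr}\big(v^{L_0}\,\widehat{\mathfrak B}_{q,t}\big)$$ is given by $$\widehat F(q,t)=\frac{(vqt)_\infty}{(q)_\infty\,(t)_\infty}.$$
   Context: Notation: $(a)_\infty:=\prod_{i=0}^\infty(1-av^i)$. Let $\Lambda$ be the ring of symmetric functions over $\mathbb Q(q,t)$ and $\widetilde H_\lambda(x;q,t)$ the modified Macdonald polynomials of Garsia–Haiman. The operator $\widehat{\mathfrak B}_{q,t}$ on $\Lambda$ is the linear operator with $\widehat{\mathfrak B}_{q,t}\widetilde H_\lambda=\widehat B_\lambda(q,t)\widetilde H_\lambda$ for every partition $\lambda$, where $\widehat B_\lambda(q,t)=\frac1{1-q}\sum_{i\ge1}t^{i-1}q^{\lambda_i}$ (with $\lambda_i=0$ beyond the length of $\lambda$). The energy operator $L_0$ multiplies homogeneous symmetric functions of degree $m$ by $m$, and $\mathrm{Tr}(v^{L_0}\mathfrak f)=\sum_m v^m\,\mathrm{tr}(\mathfrak f|_{\Lambda^m})$. *)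

theory Defs
  imports "HOL-Analysis.Analysis"
begin

definition partitions :: "nat \<Rightarrow> nat list set" where
  "partitions m = {xs. sorted_wrt (\<ge>) xs \<and> 0 \<notin> set xs \<and> sum_list xs = m}"

definition part :: "nat list \<Rightarrow> nat \<Rightarrow> nat" where
  "part xs i = (if 1 \<le> i \<and> i \<le> length xs then xs ! (i - 1) else 0)"

definition Bhat :: "complex \<Rightarrow> complex \<Rightarrow> nat list \<Rightarrow> complex" where
  "Bhat q t xs = (1 / (1 - q)) * (\<Sum>j. t ^ j * q ^ part xs (Suc j))"

text \<open>Trace of hat B_{q,t} restricted to Lambda^m: the operator is diagonal in the
  basis (modified Macdonald polynomials H_lambda, lambda a partition of m) of Lambda^m,
  so its trace is the sum of its eigenvalues.\<close>
definition trace_B :: "complex \<Rightarrow> complex \<Rightarrow> nat \<Rightarrow> complex" where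
  "trace_B q t m = (\<Sum>xs\<in>partitions m. Bhat q t xs)"

definition qpoch_inf :: "complex \<Rightarrow> complex \<Rightarrow> complex" where
  "qpoch_inf v a = (\<Prod>i. (1 - a * v ^ i))"

end

theory Submission
  imports Defs
begin

(* Encode a partition lambda with at most N parts by its differences d_k = lambda_k -
   lambda_(k+1), k = 1..N, which range freely over all N-tuples of naturals. Since |lambda| =
   sum_k k d_k and lambda_(j+1) = sum_(k>j) d_k, the sum of v^|lambda| q^lambda_(j+1) over these
   partitions is a product of geometric series, namely (qv;v)_j / ((v;v)_j (qv;v)_N). Weighting
   with t^j and letting N tend to infinity, the q-binomial theorem sum_j (a;v)_j / (v;v)_j t^j =
   (at;v)_inf / (t;v)_inf for a = qv gives (vqt)_inf / ((t)_inf (qv)_inf), and (q)_inf = (1 - q)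
   (qv)_inf absorbs the factor 1/(1 - q) of the eigenvalues. Absolute convergence follows from the
   same computation with v, q, t replaced by their norms. *)

section \<open>Geometric series and exhausting sequences\<close>

lemma has_sum_geometric:
  fixes z :: "'a::{real_normed_field,banach}"
  assumes "norm z < 1"
  shows "((\<lambda>n. z ^ n) has_sum (1 / (1 - z))) UNIV"
  using assms
  by (intro norm_summable_imp_has_sum geometric_sums) (simp_all add: norm_power summable_geometric)

lemma has_sum_prod_geometric_PiE:
  fixes z :: "'i \<Rightarrow> 'a::{real_normed_field,banach}"
  assumes "finite A" "\<And>k. k \<in> A \<Longrightarrow> norm (z k) < 1"
  shows "((\<lambda>d. \<Prod>k\<in>A. z k ^ d k) has_sum (\<Prod>k\<in>A. 1 / (1 - z k))) (PiE A (\<lambda>_. UNIV))"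
proof -
  have "infsum (\<lambda>d. \<Prod>k\<in>A. norm (z k) ^ d k) (PiE A (\<lambda>_. UNIV)) = (\<Prod>k\<in>A. 1 / (1 - norm (z k)))"
    using assms has_sum_geometric[of "norm (z _)"]
    by (subst infsum_prod_PiE_abs) (auto intro!: prod.cong infsumI simp: summable_on_def)
  also have "\<dots> \<noteq> 0"
    using assms by (simp add: prod_zero_iff) (metis less_irrefl)
  \<comment> \<open>the infinite sum of a non-summable family is 0 by convention, so this forces summability\<close>
  finally have "(\<lambda>d. \<Prod>k\<in>A. norm (z k) ^ d k) summable_on PiE A (\<lambda>_. UNIV)"
    using infsum_not_exists by blast
  then have "(\<lambda>d. norm (\<Prod>k\<in>A. z k ^ d k)) summable_on PiE A (\<lambda>_. UNIV)"
    by (simp add: norm_power flip: prod_norm)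
  then have "(\<lambda>d. \<Prod>k\<in>A. z k ^ d k) summable_on PiE A (\<lambda>_. UNIV)"
    by (rule abs_summable_summable)
  moreover have "infsum (\<lambda>d. \<Prod>k\<in>A. z k ^ d k) (PiE A (\<lambda>_. UNIV)) = (\<Prod>k\<in>A. 1 / (1 - z k))"
    using assms has_sum_geometric[of "z _"] has_sum_geometric[of "norm (z _)"]
    by (subst infsum_prod_PiE_abs) (auto intro!: prod.cong infsumI simp: summable_on_def norm_power)
  ultimately show ?thesis by (simp add: has_sum_iff)
qed

lemma has_sum_sum:
  fixes f :: "'i \<Rightarrow> 'a \<Rightarrow> 'b::topological_comm_monoid_add"
  assumes "\<And>i. i \<in> I \<Longrightarrow> (f i has_sum s i) A"
  shows "((\<lambda>x. \<Sum>i\<in>I. f i x) has_sum (\<Sum>i\<in>I. s i)) A"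
  using assms by (induction I rule: infinite_finite_induct) (auto intro: has_sum_add)

lemma has_sum_LIMSEQ_exhaustion:
  fixes f :: "'a \<Rightarrow> 'b::banach"
  assumes abs: "(\<lambda>x. norm (f x)) summable_on A" and sub: "\<And>N. B N \<subseteq> A" and mono: "incseq B"
    and cover: "\<And>x. x \<in> A \<Longrightarrow> \<exists>N. x \<in> B N"
    and hs: "\<And>N. (f has_sum s N) (B N)" and lim: "s \<longlonglongrightarrow> S"
  shows "(f has_sum S) A"
proof -
  define T where "T = infsum f A"
  let ?g = "\<lambda>x. norm (f x)"
  have hT: "(f has_sum T) A"
    unfolding T_def using abs_summable_summable[OF abs] by (rule has_sum_infsum)
  have finite_cover: "\<exists>N. F \<subseteq> B N" if "finite F" "F \<subseteq> A" for F
    using that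
  proof (induction F rule: finite_induct)
    case (insert x F)
    then obtain N1 N2 where "F \<subseteq> B N1" "x \<in> B N2"
      using cover by blast
    moreover have "B N1 \<subseteq> B (max N1 N2)" "B N2 \<subseteq> B (max N1 N2)"
      using mono by (simp_all add: incseq_def)
    ultimately have "insert x F \<subseteq> B (max N1 N2)"
      by blast
    then show ?case ..
  qed simp
  have "s \<longlonglongrightarrow> T"
  proof (rule LIMSEQ_I)
    fix r :: real assume "0 < r"
    then obtain F where F: "finite F" "F \<subseteq> A" and "dist (sum ?g F) (infsum ?g A) \<le> r / 2"
      using infsum_finite_approximation[OF abs, of "r / 2"] by auto
    then have F_close: "infsum ?g A - sum ?g F \<le> r / 2"
      using abs_le_D2[of "sum ?g F - infsum ?g A"] unfolding dist_real_def by linarith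
    obtain N0 where "F \<subseteq> B N0" using finite_cover[OF F] by blast
    have "norm (s n - T) < r" if "N0 \<le> n" for n
    proof -
      have F_sub: "F \<subseteq> B n" using \<open>F \<subseteq> B N0\<close> incseqD[OF mono that] by auto
      have abs_B: "?g summable_on B n" and abs_D: "?g summable_on (A - B n)"
        using abs sub by (auto intro: summable_on_subset_banach)
      have "norm (s n - T) = norm (infsum f (A - B n))"
        using infsumI[OF has_sum_Diff[OF hT hs[of n] sub[of n]]] by (simp add: norm_minus_commute)
      also have "\<dots> \<le> infsum ?g (A - B n)"
        using abs_D by (rule norm_infsum_bound)
      also have "\<dots> = infsum ?g A - infsum ?g (B n)"
        using abs abs_B sub by (rule infsum_Diff)
      also have "\<dots> \<le> infsum ?g A - sum ?g F"
        using infsum_mono2[OF _ abs_B F_sub] F by simp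
      finally show ?thesis using F_close \<open>0 < r\<close> by linarith
    qed
    then show "\<exists>N0. \<forall>n\<ge>N0. norm (s n - T) < r" by blast
  qed
  with lim have "S = T" by (rule LIMSEQ_unique)
  with hT show ?thesis by simp
qed

section \<open>q-Pochhammer symbols and the q-binomial theorem\<close>

definition qpoch :: "'a::comm_ring_1 \<Rightarrow> 'a \<Rightarrow> nat \<Rightarrow> 'a" where
  "qpoch v a n = (\<Prod>k<n. 1 - a * v ^ k)"

definition qbinom_coeff :: "'a::field \<Rightarrow> 'a \<Rightarrow> nat \<Rightarrow> 'a" where
  "qbinom_coeff v a j = qpoch v a j / qpoch v v j"

lemma norm_mult_power_less_one:
  fixes v a :: "'a::real_normed_div_algebra"
  assumes "norm v \<le> 1" "norm a < 1"
  shows "norm (a * v ^ k) < 1"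
proof -
  have "norm (a * v ^ k) \<le> norm a * 1"
    unfolding norm_mult norm_power using assms by (intro mult_left_mono power_le_one) auto
  then show ?thesis using assms by simp
qed

lemma one_minus_mult_power_nonzero:
  fixes v a :: "'a::real_normed_div_algebra"
  assumes "norm v \<le> 1" "norm a < 1"
  shows "1 - a * v ^ k \<noteq> 0"
  using norm_mult_power_less_one[OF assms, of k] by (metis norm_one less_irrefl eq_iff_diff_eq_0)

lemma qpoch_nonzero:
  fixes v a :: "'a::real_normed_field"
  assumes "norm v \<le> 1" "norm a < 1"
  shows "qpoch v a n \<noteq> 0"
  using one_minus_mult_power_nonzero[OF assms] by (simp add: qpoch_def)

lemma convergent_prod_qpoch:
  fixes v a :: "'a::{real_normed_field,banach}"
  assumes "norm v < 1"
  shows "convergent_prod (\<lambda>i. 1 - a * v ^ i)"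
proof -
  have "summable (\<lambda>i. norm a * norm v ^ i)"
    using assms by (intro summable_mult summable_geometric) simp
  then have "abs_convergent_prod (\<lambda>i. 1 - a * v ^ i)"
    by (intro summable_imp_abs_convergent_prod) (simp add: norm_mult norm_power)
  then show ?thesis by (rule abs_convergent_prod_imp_convergent_prod)
qed

lemma qpoch_LIMSEQ:
  fixes v a :: "'a::{real_normed_field,banach}"
  assumes "norm v < 1"
  shows "qpoch v a \<longlonglongrightarrow> (\<Prod>i. 1 - a * v ^ i)"
  unfolding qpoch_def
  using convergent_prod_LIMSEQ[OF convergent_prod_qpoch[OF assms]]
  by (simp add: LIMSEQ_lessThan_iff_atMost)

lemma prodinf_qpoch_nonzero:
  fixes v a :: "'a::{real_normed_field,banach}"
  assumes "norm v < 1" "norm a < 1"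
  shows "(\<Prod>i. 1 - a * v ^ i) \<noteq> 0"
  using one_minus_mult_power_nonzero[of v a] assms
  by (intro prodinf_nonzero convergent_prod_qpoch) auto

lemma prodinf_qpoch_split_head:
  fixes v a :: "'a::{real_normed_field,banach}"
  assumes "norm v < 1" "a \<noteq> 1"
  shows "(\<Prod>i. 1 - a * v ^ i) = (1 - a) * (\<Prod>i. 1 - a * v * v ^ i)"
  using prodinf_split_head[OF convergent_prod_qpoch[OF assms(1)], of a] assms(2)
  by (simp add: mult_ac)

lemma qbinom_coeff_0 [simp]: "qbinom_coeff v a 0 = 1"
  by (simp add: qbinom_coeff_def qpoch_def)

lemma qbinom_coeff_Suc:
  "qbinom_coeff v a (Suc j) = qbinom_coeff v a j * ((1 - a * v ^ j) / (1 - v ^ Suc j))"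
  by (simp add: qbinom_coeff_def qpoch_def)

lemma qbinom_coeff_LIMSEQ:
  fixes v a :: "'a::{real_normed_field,banach}"
  assumes "norm v < 1"
  shows "qbinom_coeff v a \<longlonglongrightarrow> (\<Prod>i. 1 - a * v ^ i) / (\<Prod>i. 1 - v * v ^ i)"
  unfolding qbinom_coeff_def[abs_def]
  using assms by (intro tendsto_divide qpoch_LIMSEQ prodinf_qpoch_nonzero)

lemma summable_qbinom_coeff_power:
  fixes v a t :: "'a::{real_normed_field,banach}"
  assumes "norm v < 1" "norm t < 1"
  shows "summable (\<lambda>j. qbinom_coeff v a j * t ^ j)"
proof -
  have "Bseq (qbinom_coeff v a)"
    using qbinom_coeff_LIMSEQ[OF assms(1)] by (intro convergent_imp_Bseq convergentI)
  then obtain B where "\<And>j. norm (qbinom_coeff v a j) \<le> B"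
    by (auto simp: Bseq_def)
  then have "norm (qbinom_coeff v a j * t ^ j) \<le> B * norm t ^ j" for j
    by (simp add: norm_mult norm_power mult_right_mono)
  moreover have "summable (\<lambda>j. B * norm t ^ j)"
    using assms(2) by (intro summable_mult summable_geometric) simp
  ultimately show ?thesis
    by (rule summable_comparison_test'[rotated])
qed

lemma qbinom_series_functional_eq:
  fixes v a s :: "'a::{real_normed_field,banach}"
  assumes v: "norm v < 1" and s: "norm s < 1"
  shows "(1 - s) * (\<Sum>j. qbinom_coeff v a j * s ^ j)
         = (1 - a * s) * (\<Sum>j. qbinom_coeff v a j * (v * s) ^ j)"
proof -
  let ?c = "qbinom_coeff v a"
  define F where "F = (\<Sum>j. ?c j * s ^ j)"
  define G where "G = (\<Sum>j. ?c j * (v * s) ^ j)"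
  have vs: "norm (v * s) < 1"
    using norm_mult_power_less_one[of v s 1] v s by (simp add: mult_ac)
  have shift: "(\<lambda>j. if j = 0 then 0 else e (j - 1)) sums E" if "e sums E" for e and E :: 'a
    using that sums_Suc_iff[of "\<lambda>j. if j = 0 then 0 else e (j - 1)" E] by simp
  have F: "(\<lambda>j. ?c j * s ^ j) sums F" and G: "(\<lambda>j. ?c j * (v * s) ^ j) sums G"
    unfolding F_def G_def using summable_qbinom_coeff_power v s vs by (auto intro: summable_sums)
  have L: "(\<lambda>j. ?c j * s ^ j - (if j = 0 then 0 else s * (?c (j - 1) * s ^ (j - 1)))) sums (F - s * F)"
    by (intro sums_diff F shift sums_mult)
  have R: "(\<lambda>j. ?c j * (v * s) ^ j - (if j = 0 then 0 else a * s * (?c (j - 1) * (v * s) ^ (j - 1))))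
      sums (G - a * s * G)"
    by (intro sums_diff G shift sums_mult)
  have termwise: "?c j * s ^ j - (if j = 0 then 0 else s * (?c (j - 1) * s ^ (j - 1)))
      = ?c j * (v * s) ^ j - (if j = 0 then 0 else a * s * (?c (j - 1) * (v * s) ^ (j - 1)))" for j
  proof (cases j)
    case (Suc i)
    have "1 - v ^ Suc i \<noteq> 0"
      using one_minus_mult_power_nonzero[of v v i] v by (simp add: mult_ac)
    then show ?thesis
      unfolding Suc by (simp add: qbinom_coeff_Suc field_simps power_mult_distrib)
  qed simp
  have "F - s * F = G - a * s * G"
    using L R unfolding termwise by (rule sums_unique2)
  then show ?thesis
    unfolding F_def G_def by (simp add: algebra_simps)
qed

theorem q_binomial:
  fixes v a t :: "'a::{real_normed_field,banach}"
  assumes v: "norm v < 1" and t: "norm t < 1"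
  shows "(\<lambda>j. qbinom_coeff v a j * t ^ j) sums ((\<Prod>i. 1 - a * t * v ^ i) / (\<Prod>i. 1 - t * v ^ i))"
proof -
  define f where "f s = (\<Sum>j. qbinom_coeff v a j * s ^ j)" for s
  have vt: "norm (v ^ n * t) < 1" for n
    using norm_mult_power_less_one[of v t n] v t by (simp add: mult_ac)
  have iter: "f t * qpoch v t n = qpoch v (a * t) n * f (v ^ n * t)" for n
  proof (induction n)
    case (Suc n)
    have "f t * qpoch v t (Suc n) = qpoch v (a * t) n * ((1 - v ^ n * t) * f (v ^ n * t))"
      using Suc.IH by (simp add: qpoch_def mult_ac)
    also have "\<dots> = qpoch v (a * t) n * ((1 - a * (v ^ n * t)) * f (v * (v ^ n * t)))"
      unfolding f_def by (simp only: qbinom_series_functional_eq[OF v vt])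
    also have "\<dots> = qpoch v (a * t) (Suc n) * f (v ^ Suc n * t)"
      by (simp add: qpoch_def mult_ac)
    finally show ?case .
  qed (simp add: qpoch_def)
  have "isCont f 0"
    unfolding f_def
    by (rule isCont_powser[of _ "1 / 2"]) (simp_all add: summable_qbinom_coeff_power v norm_divide)
  moreover have "(\<lambda>n. v ^ n * t) \<longlonglongrightarrow> 0"
    using LIMSEQ_power_zero[OF v] by (auto intro: tendsto_mult_left_zero)
  ultimately have "(\<lambda>n. f (v ^ n * t)) \<longlonglongrightarrow> f 0"
    by (metis isCont_tendsto_compose)
  then have "(\<lambda>n. qpoch v (a * t) n * f (v ^ n * t)) \<longlonglongrightarrow> (\<Prod>i. 1 - a * t * v ^ i) * 1"
    unfolding f_def by (intro tendsto_mult qpoch_LIMSEQ v) simp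
  moreover have "(\<lambda>n. f t * qpoch v t n) \<longlonglongrightarrow> f t * (\<Prod>i. 1 - t * v ^ i)"
    by (intro tendsto_mult_left qpoch_LIMSEQ v)
  ultimately have "f t * (\<Prod>i. 1 - t * v ^ i) = (\<Prod>i. 1 - a * t * v ^ i)"
    unfolding iter by (simp add: LIMSEQ_unique)
  then have "f t = (\<Prod>i. 1 - a * t * v ^ i) / (\<Prod>i. 1 - t * v ^ i)"
    using prodinf_qpoch_nonzero[OF v t] by (simp add: eq_divide_eq)
  moreover have "(\<lambda>j. qbinom_coeff v a j * t ^ j) sums f t"
    unfolding f_def by (intro summable_sums summable_qbinom_coeff_power v t)
  ultimately show ?thesis
    by simp
qed

section \<open>Partitions and their part differences\<close>

definition all_partitions :: "nat list set" where
  "all_partitions = {xs. sorted_wrt (\<ge>) xs \<and> 0 \<notin> set xs}"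

definition partitions_length_le :: "nat \<Rightarrow> nat list set" where
  "partitions_length_le N = {xs \<in> all_partitions. length xs \<le> N}"

definition part_diffs :: "nat \<Rightarrow> nat list \<Rightarrow> nat \<Rightarrow> nat" where
  "part_diffs N xs = (\<lambda>k\<in>{..<N}. part xs (Suc k) - part xs (Suc (Suc k)))"

definition partition_of_diffs :: "nat \<Rightarrow> (nat \<Rightarrow> nat) \<Rightarrow> nat list" where
  "partition_of_diffs N d = takeWhile (\<lambda>x. 0 < x) (map (\<lambda>i. \<Sum>k\<in>{i..<N}. d k) [0..<N])"

lemma part_0 [simp]: "part xs 0 = 0"
  by (simp add: part_def)

lemma part_beyond_length: "length xs < i \<Longrightarrow> part xs i = 0"
  by (simp add: part_def)

lemma part_antimono:
  assumes "xs \<in> all_partitions" "1 \<le> i" "i \<le> j"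
  shows "part xs j \<le> part xs i"
proof (cases "j \<le> length xs \<and> i < j")
  case True
  then have "xs ! (j - 1) \<le> xs ! (i - 1)"
    using assms by (intro sorted_wrt_nth_less[of "(\<ge>)"]) (auto simp: all_partitions_def)
  then show ?thesis using True assms by (simp add: part_def)
qed (use assms in \<open>auto simp: part_def\<close>)

lemma part_pos:
  assumes "xs \<in> all_partitions" "1 \<le> i" "i \<le> length xs"
  shows "0 < part xs i"
proof -
  have "xs ! (i - 1) \<in> set xs" "0 \<notin> set xs"
    using assms by (auto simp: all_partitions_def)
  then have "xs ! (i - 1) \<noteq> 0" by metis
  with assms show ?thesis by (simp add: part_def)
qed

lemma all_partitions_eqI:
  assumes "xs \<in> all_partitions" "ys \<in> all_partitions" "\<And>i. part xs i = part ys i"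
  shows "xs = ys"
proof -
  have len: "length xs = length ys"
  proof (rule ccontr)
    assume "length xs \<noteq> length ys"
    then show False
      using part_pos[OF assms(1), of "length xs"] part_pos[OF assms(2), of "length ys"]
        part_beyond_length[of xs "length ys"] part_beyond_length[of ys "length xs"] assms(3)
      by (cases "length xs < length ys") auto
  qed
  show ?thesis
  proof (rule nth_equalityI[OF len])
    fix i assume "i < length xs"
    then show "xs ! i = ys ! i" using assms(3)[of "Suc i"] len by (simp add: part_def)
  qed
qed

lemma part_eq_sum_part_diffs:
  assumes "xs \<in> partitions_length_le N"
  shows "part xs (Suc i) = (\<Sum>k\<in>{i..<N}. part_diffs N xs k)"
proof (induction "N - i" arbitrary: i)
  case 0
  then show ?case using assms by (simp add: partitions_length_le_def part_beyond_length)
next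
  case (Suc m)
  then have "i < N" by simp
  have "part xs (Suc (Suc i)) \<le> part xs (Suc i)"
    using assms by (intro part_antimono) (auto simp: partitions_length_le_def)
  moreover have "part xs (Suc (Suc i)) = (\<Sum>k\<in>{Suc i..<N}. part_diffs N xs k)"
    using Suc by simp
  ultimately show ?case
    using \<open>i < N\<close> by (simp add: sum.atLeast_Suc_lessThan part_diffs_def)
qed

lemma sum_tails_eq_weighted_sum:
  fixes g :: "nat \<Rightarrow> 'a::comm_semiring_1"
  shows "(\<Sum>i<N. \<Sum>k\<in>{i..<N}. g k) = (\<Sum>k<N. of_nat (Suc k) * g k)"
proof (induction N)
  case (Suc N)
  have "(\<Sum>i<N. \<Sum>k\<in>{i..<Suc N}. g k) = (\<Sum>i<N. \<Sum>k\<in>{i..<N}. g k) + of_nat N * g N"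
    by (simp add: sum.distrib)
  then show ?case using Suc by (simp add: algebra_simps)
qed simp

lemma sum_list_eq_sum_part_diffs:
  assumes "xs \<in> partitions_length_le N"
  shows "sum_list xs = (\<Sum>k<N. Suc k * part_diffs N xs k)"
proof -
  have len: "length xs \<le> N" using assms by (simp add: partitions_length_le_def)
  have "sum_list xs = (\<Sum>i<length xs. part xs (Suc i))"
    by (simp add: sum_list_sum_nth atLeast0LessThan part_def)
  also have "\<dots> = (\<Sum>i<N. part xs (Suc i))"
    using len by (intro sum.mono_neutral_left) (auto simp: part_beyond_length)
  also have "\<dots> = (\<Sum>i<N. \<Sum>k\<in>{i..<N}. part_diffs N xs k)"
    using part_eq_sum_part_diffs[OF assms] by simp
  finally show ?thesis by (simp add: sum_tails_eq_weighted_sum)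
qed

lemma part_partition_of_diffs:
  "part (partition_of_diffs N d) (Suc i) = (\<Sum>k\<in>{i..<N}. d k)"
proof -
  define g where "g = (\<lambda>i. \<Sum>k\<in>{i..<N}. d k)"
  define L where "L = map g [0..<N]"
  define M where "M = length (takeWhile (\<lambda>x. 0 < x) L)"
  have pod: "partition_of_diffs N d = takeWhile (\<lambda>x. 0 < x) L"
    by (simp add: partition_of_diffs_def L_def g_def)
  have "M \<le> N" using length_takeWhile_le[of _ L] by (simp add: M_def L_def)
  show ?thesis
  proof (cases "i < M")
    case True
    then show ?thesis
      using \<open>M \<le> N\<close> by (simp add: pod part_def M_def takeWhile_nth L_def g_def)
  next
    case False
    have "g i = 0"
    proof (cases "i < N")
      case True
      then have "g M = 0"
        using False \<open>M \<le> N\<close> nth_length_takeWhile[of "\<lambda>x. 0 < x" L] by (simp add: M_def L_def)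
      moreover have "g i \<le> g M" unfolding g_def using False by (intro sum_mono2) auto
      ultimately show ?thesis by simp
    qed (simp add: g_def)
    with False show ?thesis by (simp add: pod part_def M_def g_def)
  qed
qed

lemma partition_of_diffs_mem: "partition_of_diffs N d \<in> partitions_length_le N"
proof -
  define L where "L = map (\<lambda>i. \<Sum>k\<in>{i..<N}. d k) [0..<N]"
  have "sorted_wrt (\<ge>) L"
    unfolding sorted_wrt_iff_nth_less L_def by (auto intro: sum_mono2)
  then have "sorted_wrt (\<ge>) (takeWhile (\<lambda>x. 0 < x) L)"
    by (metis sorted_wrt_take takeWhile_eq_take)
  moreover have "length (takeWhile (\<lambda>x. 0 < x) L) \<le> N"
    using length_takeWhile_le[of _ L] by (simp add: L_def)
  ultimately show ?thesis
    by (auto simp: partitions_length_le_def all_partitions_def partition_of_diffs_def L_def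
        dest: set_takeWhileD)
qed

lemma bij_betw_part_diffs:
  "bij_betw (part_diffs N) (partitions_length_le N) (PiE {..<N} (\<lambda>_. UNIV))"
proof (rule bij_betw_byWitness[where f' = "partition_of_diffs N"])
  show "\<forall>xs\<in>partitions_length_le N. partition_of_diffs N (part_diffs N xs) = xs"
  proof
    fix xs assume xs: "xs \<in> partitions_length_le N"
    show "partition_of_diffs N (part_diffs N xs) = xs"
    proof (rule all_partitions_eqI)
      fix i show "part (partition_of_diffs N (part_diffs N xs)) i = part xs i"
        by (cases i) (simp_all add: part_partition_of_diffs part_eq_sum_part_diffs[OF xs])
    qed (use xs partition_of_diffs_mem in \<open>auto simp: partitions_length_le_def\<close>)
  qed
  show "\<forall>d\<in>PiE {..<N} (\<lambda>_. UNIV). part_diffs N (partition_of_diffs N d) = d"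
  proof
    fix d :: "nat \<Rightarrow> nat" assume d: "d \<in> PiE {..<N} (\<lambda>_. UNIV)"
    show "part_diffs N (partition_of_diffs N d) = d"
    proof
      fix k show "part_diffs N (partition_of_diffs N d) k = d k"
        using PiE_arb[OF d, of k]
        by (cases "k < N") (simp_all add: part_diffs_def part_partition_of_diffs sum.atLeast_Suc_lessThan)
    qed
  qed
  show "part_diffs N ` partitions_length_le N \<subseteq> PiE {..<N} (\<lambda>_. UNIV)"
    by (simp add: image_subset_iff part_diffs_def)
qed (use partition_of_diffs_mem in blast)

lemma power_size_part_eq_prod_part_diffs:
  fixes v q :: "'a::comm_monoid_mult"
  assumes "xs \<in> partitions_length_le N"
  shows "v ^ sum_list xs * q ^ part xs (Suc j)
         = (\<Prod>k<N. (v ^ Suc k * (if j \<le> k then q else 1)) ^ part_diffs N xs k)"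
proof -
  let ?d = "part_diffs N xs"
  have "(v ^ Suc k * (if j \<le> k then q else 1)) ^ ?d k
        = v ^ (Suc k * ?d k) * (if k \<in> {j..<N} then q ^ ?d k else 1)" if "k < N" for k
    using that by (simp add: power_mult_distrib power_add flip: power_mult)
  then have "(\<Prod>k<N. (v ^ Suc k * (if j \<le> k then q else 1)) ^ ?d k)
      = (\<Prod>k<N. v ^ (Suc k * ?d k)) * (\<Prod>k<N. if k \<in> {j..<N} then q ^ ?d k else 1)"
    by (simp add: prod.distrib)
  also have "(\<Prod>k<N. if k \<in> {j..<N} then q ^ ?d k else 1) = (\<Prod>k\<in>{j..<N}. q ^ ?d k)"
    by (subst prod.If_cases) (auto intro: prod.cong)
  also have "(\<Prod>k<N. v ^ (Suc k * ?d k)) * (\<Prod>k\<in>{j..<N}. q ^ ?d k)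
      = v ^ sum_list xs * q ^ part xs (Suc j)"
    by (simp add: sum_list_eq_sum_part_diffs[OF assms] part_eq_sum_part_diffs[OF assms] power_sum)
  finally show ?thesis ..
qed

lemma finite_partitions: "finite (partitions m)"
proof (rule finite_subset)
  have "length xs \<le> sum_list xs" if "0 \<notin> set xs" for xs :: "nat list"
    using that by (induction xs) auto
  then show "partitions m \<subseteq> {xs. set xs \<subseteq> {..m} \<and> length xs \<le> m}"
    by (auto simp: partitions_def member_le_sum_list)
qed (rule finite_lists_length_le, simp)

lemma sums_sum_partitions:
  fixes f :: "nat list \<Rightarrow> 'a::{topological_comm_monoid_add,t3_space}"
  assumes "(f has_sum S) all_partitions"
  shows "(\<lambda>m. \<Sum>xs\<in>partitions m. f xs) sums S"
proof -
  have "((\<lambda>(m, xs). f xs) has_sum S) (Sigma UNIV partitions)"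
    using assms
    by (subst has_sum_reindex_bij_witness[where j = snd and i = "\<lambda>xs. (sum_list xs, xs)"])
       (auto simp: partitions_def all_partitions_def)
  then have "((\<lambda>m. \<Sum>xs\<in>partitions m. f xs) has_sum S) UNIV"
    by (rule has_sum_SigmaD) (auto intro: has_sum_finiteI finite_partitions)
  then show ?thesis by (rule has_sum_imp_sums)
qed

section \<open>The generating function of the eigenvalues\<close>

lemma prod_inverse_factors_eq_qbinom_coeff:
  fixes v q :: "'a::real_normed_field"
  assumes v: "norm v < 1" and qv: "norm (q * v) < 1" and "j \<le> N"
  shows "(\<Prod>k<N. 1 / (1 - v ^ Suc k * (if j \<le> k then q else 1)))
         = qbinom_coeff v (q * v) j / qpoch v (q * v) N"
proof -
  define P where "P = (\<Prod>k\<in>{j..<N}. 1 - q * v * v ^ k)"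
  have split: "(\<Prod>k<N. h k) = (\<Prod>k<j. h k) * (\<Prod>k\<in>{j..<N}. h k)" for h :: "nat \<Rightarrow> 'a"
    using prod.atLeastLessThan_concat[of 0 j N h] \<open>j \<le> N\<close> by (simp add: lessThan_atLeast0)
  have "(\<Prod>k<N. 1 / (1 - v ^ Suc k * (if j \<le> k then q else 1)))
      = (\<Prod>k<j. 1 / (1 - v * v ^ k)) * (\<Prod>k\<in>{j..<N}. 1 / (1 - q * v * v ^ k))"
    unfolding split by (intro arg_cong2[where f = "(*)"] prod.cong) (auto simp: mult_ac)
  also have "\<dots> = 1 / (qpoch v v j * P)"
    by (simp add: qpoch_def P_def prod_dividef)
  moreover have "qpoch v (q * v) N = qpoch v (q * v) j * P"
    unfolding qpoch_def P_def split ..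
  moreover have "qpoch v (q * v) j \<noteq> 0"
    using v qv by (intro qpoch_nonzero) auto
  ultimately show ?thesis
    by (simp add: qbinom_coeff_def)
qed

lemma has_sum_power_size_part:
  fixes v q :: "'a::{real_normed_field,banach}"
  assumes v: "norm v < 1" and qv: "norm (q * v) < 1" and "j \<le> N"
  shows "((\<lambda>xs. v ^ sum_list xs * q ^ part xs (Suc j))
           has_sum (qbinom_coeff v (q * v) j / qpoch v (q * v) N)) (partitions_length_le N)"
proof -
  define z where "z k = v ^ Suc k * (if j \<le> k then q else 1)" for k
  have "norm (z k) < 1" for k
    using norm_mult_power_less_one[of v v k] norm_mult_power_less_one[of v "q * v" k] v qv
    by (simp add: z_def mult_ac)
  then have "((\<lambda>d. \<Prod>k<N. z k ^ d k) has_sum (\<Prod>k<N. 1 / (1 - z k))) (PiE {..<N} (\<lambda>_. UNIV))"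
    by (intro has_sum_prod_geometric_PiE) auto
  then have "((\<lambda>xs. \<Prod>k<N. z k ^ part_diffs N xs k) has_sum (\<Prod>k<N. 1 / (1 - z k)))
      (partitions_length_le N)"
    by (subst has_sum_reindex_bij_betw[OF bij_betw_part_diffs])
  then show ?thesis
    unfolding z_def prod_inverse_factors_eq_qbinom_coeff[OF assms]
    by (rule has_sum_cong[THEN iffD1, rotated]) (simp add: power_size_part_eq_prod_part_diffs)
qed

definition part_series :: "'a::{real_normed_field,banach} \<Rightarrow> 'a \<Rightarrow> nat list \<Rightarrow> 'a" where
  "part_series q t xs = (\<Sum>j. t ^ j * q ^ part xs (Suc j))"

lemma part_series_sums:
  fixes q t :: "'a::{real_normed_field,banach}"
  assumes "norm t < 1" and "length xs \<le> N"
  shows "(\<lambda>j. t ^ j * q ^ part xs (Suc j))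
           sums ((\<Sum>j<N. t ^ j * q ^ part xs (Suc j)) + t ^ N / (1 - t))"
proof -
  have "(\<lambda>i. t ^ N * t ^ i) sums (t ^ N * (1 / (1 - t)))"
    by (intro sums_mult geometric_sums assms)
  moreover have "(\<lambda>i. t ^ (i + N) * q ^ part xs (Suc (i + N))) = (\<lambda>i. t ^ N * t ^ i)"
    using assms(2) by (simp add: part_beyond_length power_add mult_ac)
  ultimately have "(\<lambda>i. t ^ (i + N) * q ^ part xs (Suc (i + N))) sums (t ^ N / (1 - t))"
    by simp
  then show ?thesis
    by (subst (asm) sums_iff_shift) (simp add: add.commute)
qed

lemma summable_part_series:
  fixes q t :: "'a::{real_normed_field,banach}"
  assumes "norm t < 1"
  shows "summable (\<lambda>j. t ^ j * q ^ part xs (Suc j))"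
  using part_series_sums[OF assms order_refl] by (rule sums_summable)

definition trunc_gf :: "'a::{real_normed_field,banach} \<Rightarrow> 'a \<Rightarrow> 'a \<Rightarrow> nat \<Rightarrow> 'a" where
  "trunc_gf v q t N =
     ((\<Sum>j<N. qbinom_coeff v (q * v) j * t ^ j) + qbinom_coeff v (q * v) N * t ^ N / (1 - t))
     / qpoch v (q * v) N"

lemma has_sum_partitions_length_le:
  fixes v q t :: "'a::{real_normed_field,banach}"
  assumes v: "norm v < 1" and t: "norm t < 1" and qv: "norm (q * v) < 1"
  shows "((\<lambda>xs. v ^ sum_list xs * part_series q t xs) has_sum trunc_gf v q t N)
           (partitions_length_le N)"
proof -
  define w where "w j xs = v ^ sum_list xs * q ^ part xs (Suc j)" for j xs
  define c where "c j = qbinom_coeff v (q * v) j / qpoch v (q * v) N" for j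
  have hs: "((\<lambda>xs. (\<Sum>j<N. t ^ j * w j xs) + t ^ N / (1 - t) * w N xs)
          has_sum ((\<Sum>j<N. t ^ j * c j) + t ^ N / (1 - t) * c N)) (partitions_length_le N)"
    unfolding w_def c_def
    by (intro has_sum_add has_sum_sum has_sum_cmult_right has_sum_power_size_part v qv) auto
  have eq: "(\<Sum>j<N. t ^ j * w j xs) + t ^ N / (1 - t) * w N xs = v ^ sum_list xs * part_series q t xs"
    if "xs \<in> partitions_length_le N" for xs
  proof -
    have "length xs \<le> N" using that by (simp add: partitions_length_le_def)
    then have "part_series q t xs = (\<Sum>j<N. t ^ j * q ^ part xs (Suc j)) + t ^ N / (1 - t)"
      and "part xs (Suc N) = 0"
      using sums_unique[OF part_series_sums[OF t]] by (auto simp: part_series_def part_beyond_length)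
    then show ?thesis
      by (simp add: w_def algebra_simps sum_distrib_left)
  qed
  have val: "(\<Sum>j<N. t ^ j * c j) + t ^ N / (1 - t) * c N = trunc_gf v q t N"
    by (simp add: trunc_gf_def c_def add_divide_distrib sum_divide_distrib mult_ac)
  show ?thesis
    using hs unfolding val by (rule has_sum_cong[THEN iffD1, rotated]) (rule eq)
qed

lemma trunc_gf_LIMSEQ:
  fixes v q t :: "'a::{real_normed_field,banach}"
  assumes v: "norm v < 1" and t: "norm t < 1" and qv: "norm (q * v) < 1"
  shows "trunc_gf v q t \<longlonglongrightarrow>
           (\<Prod>i. 1 - q * v * t * v ^ i) / ((\<Prod>i. 1 - t * v ^ i) * (\<Prod>i. 1 - q * v * v ^ i))"
proof -
  let ?c = "qbinom_coeff v (q * v)" and ?S = "(\<Prod>i. 1 - q * v * t * v ^ i) / (\<Prod>i. 1 - t * v ^ i)"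
  have S: "(\<lambda>j. ?c j * t ^ j) sums ?S"
    by (rule q_binomial[OF v t])
  have "t \<noteq> 1" using t by auto
  moreover have "(\<lambda>N. ?c N * t ^ N) \<longlonglongrightarrow> 0"
    using S by (intro summable_LIMSEQ_zero sums_summable)
  ultimately have "(\<lambda>N. ?c N * t ^ N / (1 - t)) \<longlonglongrightarrow> 0"
    using tendsto_divide_zero by fastforce
  moreover have "(\<lambda>N. \<Sum>j<N. ?c j * t ^ j) \<longlonglongrightarrow> ?S"
    using S by (simp add: sums_def)
  ultimately have "(\<lambda>N. ((\<Sum>j<N. ?c j * t ^ j) + ?c N * t ^ N / (1 - t)) / qpoch v (q * v) N)
      \<longlonglongrightarrow> (?S + 0) / (\<Prod>i. 1 - q * v * v ^ i)"
    by (intro tendsto_divide tendsto_add qpoch_LIMSEQ prodinf_qpoch_nonzero v qv)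
  then show ?thesis
    by (simp add: trunc_gf_def[abs_def] divide_divide_eq_left)
qed

lemma norm_part_series_le:
  fixes q t :: "'a::{real_normed_field,banach}"
  assumes "norm t < 1"
  shows "norm (part_series q t xs) \<le> part_series (norm q) (norm t) xs"
proof -
  have "summable (\<lambda>j. norm (t ^ j * q ^ part xs (Suc j)))"
    using summable_part_series[of "norm t" "norm q" xs] assms by (simp add: norm_mult norm_power)
  then show ?thesis
    unfolding part_series_def by (rule summable_norm[THEN order_trans]) (simp add: norm_mult norm_power)
qed

lemma part_series_nonneg:
  fixes q t :: real
  assumes "0 \<le> q" "0 \<le> t" "t < 1"
  shows "0 \<le> part_series q t xs"
  unfolding part_series_def using assms summable_part_series[of t q xs]
  by (intro suminf_nonneg) auto

lemma norm_summable_on_all_partitions: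
  fixes v q t :: "'a::{real_normed_field,banach}"
  assumes v: "norm v < 1" and t: "norm t < 1" and qv: "norm (q * v) < 1"
  shows "(\<lambda>xs. norm (v ^ sum_list xs * part_series q t xs)) summable_on all_partitions"
proof -
  define g where "g xs = norm v ^ sum_list xs * part_series (norm q) (norm t) xs" for xs
  \<comment> \<open>the majorant is the same family over the reals, so its truncated sums converge too\<close>
  have g_has_sum: "(g has_sum trunc_gf (norm v) (norm q) (norm t) N) (partitions_length_le N)" for N
    unfolding g_def using v t qv by (intro has_sum_partitions_length_le) (auto simp: norm_mult)
  have g_nonneg: "0 \<le> g xs" for xs
    unfolding g_def using t by (simp add: part_series_nonneg)
  have "convergent (trunc_gf (norm v) (norm q) (norm t))"
    using trunc_gf_LIMSEQ[of "norm v" "norm t" "norm q"] v t qv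
    by (auto simp: norm_mult intro: convergentI)
  then have "Bseq (trunc_gf (norm v) (norm q) (norm t))"
    by (rule convergent_imp_Bseq)
  then obtain K where K: "\<And>N. \<bar>trunc_gf (norm v) (norm q) (norm t) N\<bar> \<le> K"
    unfolding Bseq_def real_norm_def by blast
  have "g summable_on all_partitions"
  proof (rule nonneg_bdd_above_summable_on[OF g_nonneg bdd_aboveI2])
    fix F assume F: "F \<in> {F. F \<subseteq> all_partitions \<and> finite F}"
    then have "F \<subseteq> partitions_length_le (\<Sum>xs\<in>F. length xs)"
      by (auto simp: partitions_length_le_def intro: member_le_sum)
    then have "sum g F \<le> trunc_gf (norm v) (norm q) (norm t) (\<Sum>xs\<in>F. length xs)"
      using F by (intro finite_sum_le_has_sum[OF g_has_sum] g_nonneg) auto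
    then show "sum g F \<le> K"
      using K abs_le_D1 order_trans by blast
  qed
  moreover have "norm (v ^ sum_list xs * part_series q t xs) \<le> g xs" for xs
    unfolding g_def norm_mult norm_power
    by (intro mult_left_mono norm_part_series_le t) simp
  ultimately show ?thesis
    by (rule Infinite_Sum.abs_summable_on_comparison_test')
qed

lemma has_sum_all_partitions:
  fixes v q t :: "'a::{real_normed_field,banach}"
  assumes "norm v < 1" and "norm t < 1" and "norm (q * v) < 1"
  shows "((\<lambda>xs. v ^ sum_list xs * part_series q t xs) has_sum
           (\<Prod>i. 1 - q * v * t * v ^ i) / ((\<Prod>i. 1 - t * v ^ i) * (\<Prod>i. 1 - q * v * v ^ i)))
         all_partitions"
proof (rule has_sum_LIMSEQ_exhaustion[where B = partitions_length_le and s = "trunc_gf v q t"])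
  show "incseq partitions_length_le"
    by (auto simp: incseq_def partitions_length_le_def)
qed (use norm_summable_on_all_partitions has_sum_partitions_length_le trunc_gf_LIMSEQ assms in
     \<open>auto simp: partitions_length_le_def\<close>)

theorem theorem3p2:
  fixes q t v :: complex
  assumes "norm v < 1" and "norm t < 1" and "norm (q * v) < 1" and "q \<noteq> 1"
  shows "(\<lambda>m. v ^ m * trace_B q t m) sums
           (qpoch_inf v (v * q * t) / (qpoch_inf v q * qpoch_inf v t))"
proof -
  have "(\<lambda>m. \<Sum>xs\<in>partitions m. v ^ sum_list xs * part_series q t xs) sums
          ((\<Prod>i. 1 - q * v * t * v ^ i) / ((\<Prod>i. 1 - t * v ^ i) * (\<Prod>i. 1 - q * v * v ^ i)))"
    using assms(1-3) by (intro sums_sum_partitions has_sum_all_partitions)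
  then have "(\<lambda>m. (\<Sum>xs\<in>partitions m. v ^ sum_list xs * part_series q t xs) / (1 - q)) sums
          ((\<Prod>i. 1 - q * v * t * v ^ i) / ((\<Prod>i. 1 - t * v ^ i) * (\<Prod>i. 1 - q * v * v ^ i)) / (1 - q))"
    by (rule sums_divide)
  moreover have "(\<Sum>xs\<in>partitions m. v ^ sum_list xs * part_series q t xs) / (1 - q)
      = v ^ m * trace_B q t m" for m
    by (simp add: trace_B_def Bhat_def part_series_def partitions_def sum_distrib_left sum_divide_distrib)
  moreover have "(\<Prod>i. 1 - q * v ^ i) = (1 - q) * (\<Prod>i. 1 - q * v * v ^ i)"
    using assms(1,4) by (rule prodinf_qpoch_split_head)
  ultimately show ?thesis
    by (simp add: qpoch_inf_def mult_ac)
qed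

end
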